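(* There is an absolute constant $c_1>0$ such that for each $b\in(0,\pi]$, each $n\in\mathbb{N}$ and every trigonometric polynomial $T_n\in\mathcal{T}_n$, $$\|F_1-T_n\|_{[-b,b]}\ge \frac{c_1 b}{n},$$ where $F_1(x)=|x|$. Moreover one can take $c_1\ge (80c_0)^{-1}$, where $c_0<10$ is an absolute constant such that $\|T_n'\|_{[-b/2,b/2]}\le \frac{c_0}{b}n\|T_n\|_{[-b,b]}$ for all $b\in(0,\pi)$, $n\in\mathbb{N}$ and all odd $T_n\in\mathcal{T}_n$.
   Context: $\mathcal{T}_n$ is the space of real trigonometric polynomials of degree $\le n$. For a function $g$ on $[a,b]$, $\|g\|_{[a,b]}:=\max_{x\in[a,b]}|g(x)|$. *)

theory Defs
  imports "HOL-Analysis.Analysis"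
begin

definition trigpoly :: "nat \<Rightarrow> (real \<Rightarrow> real) set" where
  "trigpoly n = {T. \<exists>a b :: nat \<Rightarrow> real. \<forall>x.
      T x = a 0 + (\<Sum>k=1..n. a k * cos (real k * x) + b k * sin (real k * x))}"

definition supnorm_on :: "real \<Rightarrow> real \<Rightarrow> (real \<Rightarrow> real) \<Rightarrow> real" where
  "supnorm_on a b g = (SUP x\<in>{a..b}. \<bar>g x\<bar>)"

definition bernstein_const :: "real \<Rightarrow> bool" where
  "bernstein_const c0 \<longleftrightarrow> (\<forall>b n T. 0 < b \<and> b < pi \<and> n \<ge> 1 \<and> T \<in> trigpoly n
      \<and> (\<forall>x. T (-x) = - T x) \<longrightarrow>
      supnorm_on (-b/2) (b/2) (deriv T) \<le> c0 / b * real n * supnorm_on (-b) b T)"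

end

theory Submission
  imports Defs "HOL-Computational_Algebra.Polynomial"
begin

text \<open>Both bounds come from the corner of \<open>\<bar>x\<bar>\<close> at \<open>0\<close>. If a trigonometric polynomial \<open>P\<close> is
  within \<open>E\<close> of \<open>f\<close> on \<open>[-2h, 2h]\<close>, the mean value theorem for the central difference
  \<open>P (x + h) - P (x - h)\<close> gives a point where its derivative is at least
  \<open>(f (2h) - 2 f 0 + f (-2h) - 4E) / (2h)\<close>. A Bernstein inequality bounds this derivative by
  about \<open>n / b\<close> times the size of the central difference, which is \<open>O(h + E)\<close>. For \<open>\<bar>x\<bar>\<close> the
  second difference is \<open>4h\<close>, so taking \<open>h\<close> of order \<open>b / n\<close> forces \<open>E\<close> of order \<open>b / n\<close>.

  With the constant \<open>c\<^sub>0\<close> the hypothesised inequality is applied to the central difference of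
  the even part of \<open>T\<close>, which is odd. For the absolute constant we prove Bernstein's inequality
  \<open>\<bar>T'\<bar> \<le> 2 n \<parallel>T\<parallel>\<close> on the whole line by counting zeros of \<open>T - cos (n x + p)\<close>, and move from
  \<open>[-b, b]\<close> to the whole line by the substitution \<open>sin (x / 2) = sin (b / 2) \<bar>sin (t / 2)\<bar>\<close>,
  which keeps the even part of \<open>T\<close> a trigonometric polynomial of degree \<open>n\<close>.\<close>

lemma trigpolyI:
  assumes "\<And>x. T x = a 0 + (\<Sum>k=1..n. a k * cos (real k * x) + b k * sin (real k * x))"
  shows "T \<in> trigpoly n"
  using assms unfolding trigpoly_def by blast

lemma trigpolyE:
  assumes "T \<in> trigpoly n"
  obtains a b where "\<And>x. T x = a 0 + (\<Sum>k=1..n. a k * cos (real k * x) + b k * sin (real k * x))"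
  using assms unfolding trigpoly_def by blast

lemma trigpoly_add:
  assumes "S \<in> trigpoly n" "T \<in> trigpoly n"
  shows "(\<lambda>x. S x + T x) \<in> trigpoly n"
proof -
  obtain a b where S: "\<And>x. S x = a 0 + (\<Sum>k=1..n. a k * cos (real k * x) + b k * sin (real k * x))"
    using trigpolyE[OF assms(1)] by blast
  obtain c d where T: "\<And>x. T x = c 0 + (\<Sum>k=1..n. c k * cos (real k * x) + d k * sin (real k * x))"
    using trigpolyE[OF assms(2)] by blast
  show ?thesis
    by (rule trigpolyI[where a="\<lambda>k. a k + c k" and b="\<lambda>k. b k + d k"])
       (simp add: S T sum.distrib algebra_simps)
qed

lemma trigpoly_cmult:
  assumes "T \<in> trigpoly n"
  shows "(\<lambda>x. c * T x) \<in> trigpoly n"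
proof -
  obtain a b where T: "\<And>x. T x = a 0 + (\<Sum>k=1..n. a k * cos (real k * x) + b k * sin (real k * x))"
    using trigpolyE[OF assms] by blast
  show ?thesis
    by (rule trigpolyI[where a="\<lambda>k. c * a k" and b="\<lambda>k. c * b k"])
       (simp add: T sum_distrib_left algebra_simps)
qed

lemma trigpoly_diff:
  assumes "S \<in> trigpoly n" "T \<in> trigpoly n"
  shows "(\<lambda>x. S x - T x) \<in> trigpoly n"
  using trigpoly_add[OF assms(1) trigpoly_cmult[OF assms(2), of "-1"]] by simp

lemma trigpoly_shift:
  assumes "T \<in> trigpoly n"
  shows "(\<lambda>x. T (x + h)) \<in> trigpoly n"
proof -
  obtain a b where T: "\<And>x. T x = a 0 + (\<Sum>k=1..n. a k * cos (real k * x) + b k * sin (real k * x))"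
    using trigpolyE[OF assms] by blast
  show ?thesis
    by (rule trigpolyI[where a="\<lambda>k. a k * cos (real k * h) + b k * sin (real k * h)"
          and b="\<lambda>k. b k * cos (real k * h) - a k * sin (real k * h)"])
       (simp add: T distrib_left cos_add sin_add algebra_simps)
qed

lemma trigpoly_cos_linear:
  assumes "1 \<le> n"
  shows "(\<lambda>x. cos (real n * x + p)) \<in> trigpoly n"
proof (rule trigpolyI[where a="\<lambda>k. if k = n then cos p else 0" and b="\<lambda>k. if k = n then - sin p else 0"])
  fix x
  have "(\<Sum>k=1..n. (if k = n then cos p else 0) * cos (real k * x) + (if k = n then - sin p else 0) * sin (real k * x))
      = (\<Sum>k=1..n. if k = n then cos p * cos (real n * x) - sin p * sin (real n * x) else 0)"
    by (rule sum.cong) auto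
  also have "\<dots> = cos (real n * x + p)"
    using assms by (simp add: cos_add algebra_simps)
  finally show "cos (real n * x + p) = (if 0 = n then cos p else 0) + (\<Sum>k=1..n. (if k = n then cos p else 0) * cos (real k * x) + (if k = n then - sin p else 0) * sin (real k * x))"
    using assms by simp
qed

lemma trigpoly_derivative_in_trigpoly:
  assumes "T \<in> trigpoly n"
  obtains T' where "\<And>x. (T has_real_derivative T' x) (at x)" "T' \<in> trigpoly n"
proof -
  obtain a b where T: "\<And>x. T x = a 0 + (\<Sum>k=1..n. a k * cos (real k * x) + b k * sin (real k * x))"
    using trigpolyE[OF assms] by blast
  define T' where "T' = (\<lambda>x. \<Sum>k=1..n. (b k * real k) * cos (real k * x) + (- a k * real k) * sin (real k * x))"
  have "(T has_real_derivative T' x) (at x)" for x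
    unfolding T[abs_def] T'_def by (auto intro!: derivative_eq_intros sum.cong simp: algebra_simps)
  moreover have "T' \<in> trigpoly n"
    by (rule trigpolyI[where a="\<lambda>k. if k = 0 then 0 else b k * real k" and b="\<lambda>k. - a k * real k"])
       (auto simp: T'_def intro!: sum.cong)
  ultimately show ?thesis using that by blast
qed

lemma trigpoly_has_real_derivative:
  assumes "T \<in> trigpoly n"
  shows "(T has_real_derivative deriv T x) (at x)"
  using assms by (metis trigpoly_derivative_in_trigpoly DERIV_imp_deriv)

lemma trigpoly_deriv:
  assumes "T \<in> trigpoly n"
  shows "deriv T \<in> trigpoly n"
proof -
  obtain T' where T': "\<And>x. (T has_real_derivative T' x) (at x)" "T' \<in> trigpoly n"
    using trigpoly_derivative_in_trigpoly[OF assms] by blast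
  then have "deriv T = T'" using DERIV_imp_deriv by blast
  then show ?thesis using T' by simp
qed

lemma continuous_on_trigpoly:
  assumes "T \<in> trigpoly n"
  shows "continuous_on S T"
  using trigpoly_has_real_derivative[OF assms]
  by (meson DERIV_isCont continuous_at_imp_continuous_on)

lemma trigpoly_central_difference:
  assumes "T \<in> trigpoly n"
  shows "(\<lambda>x. T (x + h) - T (x - h)) \<in> trigpoly n"
    and "deriv (\<lambda>x. T (x + h) - T (x - h)) x = deriv T (x + h) - deriv T (x - h)"
proof -
  show "(\<lambda>x. T (x + h) - T (x - h)) \<in> trigpoly n"
    using trigpoly_diff[OF trigpoly_shift[OF assms] trigpoly_shift[OF assms, of "- h"]] by simp
  have "((\<lambda>x. T (x + h) - T (x - h)) has_real_derivative deriv T (x + h) - deriv T (x - h)) (at x)"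
    by (auto intro!: derivative_eq_intros DERIV_chain2[OF trigpoly_has_real_derivative[OF assms]])
  then show "deriv (\<lambda>x. T (x + h) - T (x - h)) x = deriv T (x + h) - deriv T (x - h)"
    by (rule DERIV_imp_deriv)
qed

section \<open>Zeros and Bernstein's inequality\<close>

lemma inj_on_cis_period: "inj_on cis {s..<s + 2 * pi}"
proof (rule inj_onI)
  fix u v assume u: "u \<in> {s..<s + 2 * pi}" and v: "v \<in> {s..<s + 2 * pi}" and "cis u = cis v"
  then have "cos (u - v) = 1"
    by (metis cis.sel(1) cis_divide divide_self_if one_complex.sel(1) cis_neq_zero)
  then obtain m :: int where m: "u - v = real_of_int m * 2 * pi"
    using cos_one_2pi_int by blast
  have "\<bar>u - v\<bar> < 2 * pi" using u v by auto
  then have "\<bar>real_of_int m\<bar> * (2 * pi) < 1 * (2 * pi)" by (simp add: m abs_mult)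
  then have "\<bar>real_of_int m\<bar> < 1" by (simp only: mult_less_cancel_right) simp
  then have "m = 0" by linarith
  then show "u = v" using m by simp
qed

lemma trigpoly_as_poly_cis:
  assumes "T \<in> trigpoly n"
  obtains P :: "complex poly"
  where "degree P \<le> 2 * n" "\<And>x. poly P (cis x) = cis (real n * x) * complex_of_real (T x)"
proof -
  obtain a b where T: "\<And>x. T x = a 0 + (\<Sum>k=1..n. a k * cos (real k * x) + b k * sin (real k * x))"
    using trigpolyE[OF assms] by blast
  define c where "c k = complex_of_real (a k) / 2 - \<i> * complex_of_real (b k) / 2" for k
  define P where "P = monom (complex_of_real (a 0)) n + (\<Sum>k=1..n. monom (c k) (n + k) + monom (cnj (c k)) (n - k))"
  have "degree P \<le> 2 * n"
    unfolding P_def by (intro degree_add_le degree_sum_le) (auto intro: order.trans[OF degree_monom_le])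
  moreover have "poly P (cis x) = cis (real n * x) * complex_of_real (T x)" for x
  proof -
    have summand: "c k * cis x ^ (n + k) + cnj (c k) * cis x ^ (n - k)
        = cis (real n * x) * complex_of_real (a k * cos (real k * x) + b k * sin (real k * x))"
      if "k \<le> n" for k
    proof -
      have "cis x ^ (n + k) = cis (real n * x) * cis (real k * x)"
        unfolding Complex.DeMoivre by (simp add: cis_mult distrib_right)
      moreover have "cis x ^ (n - k) = cis (real n * x) * cis (- (real k * x))"
        using that unfolding Complex.DeMoivre by (simp add: cis_mult of_nat_diff algebra_simps)
      ultimately have "c k * cis x ^ (n + k) + cnj (c k) * cis x ^ (n - k)
          = cis (real n * x) * (c k * cis (real k * x) + cnj (c k) * cis (- (real k * x)))"
        by (simp add: algebra_simps)
      also have "c k * cis (real k * x) + cnj (c k) * cis (- (real k * x))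
          = complex_of_real (a k * cos (real k * x) + b k * sin (real k * x))"
        by (simp add: c_def complex_eq_iff field_simps)
      finally show ?thesis .
    qed
    have "poly P (cis x) = cis (real n * x) * complex_of_real (a 0)
        + (\<Sum>k=1..n. c k * cis x ^ (n + k) + cnj (c k) * cis x ^ (n - k))"
      by (simp add: P_def poly_sum poly_monom Complex.DeMoivre)
    also have "\<dots> = cis (real n * x) * complex_of_real (T x)"
      using summand by (simp add: T sum_distrib_left distrib_left)
    finally show ?thesis .
  qed
  ultimately show ?thesis by (rule that)
qed

lemma trigpoly_eq_0_if_many_zeros:
  assumes "T \<in> trigpoly n" "Z \<subseteq> {s..<s + 2 * pi}" "2 * n < card Z" "\<And>z. z \<in> Z \<Longrightarrow> T z = 0"
  shows "T x = 0"
proof -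
  obtain P where P: "degree P \<le> 2 * n" "\<And>x. poly P (cis x) = cis (real n * x) * complex_of_real (T x)"
    using trigpoly_as_poly_cis[OF assms(1)] by blast
  have "P = 0"
  proof (rule ccontr)
    assume "P \<noteq> 0"
    have "card Z = card (cis ` Z)"
      using inj_on_subset[OF inj_on_cis_period assms(2)] by (simp add: card_image)
    also have "\<dots> \<le> card {z. poly P z = 0}"
      using assms(4) P(2) by (intro card_mono poly_roots_finite[OF \<open>P \<noteq> 0\<close>]) auto
    also have "\<dots> \<le> degree P" by (rule card_poly_roots_bound[OF \<open>P \<noteq> 0\<close>])
    finally show False using P(1) assms(3) by linarith
  qed
  then show ?thesis using P(2)[of x] by simp
qed

lemma trigpoly_eq_0_if_increasing_zeros:
  assumes "T \<in> trigpoly n" "strict_mono z" "z (2 * n) < z 0 + 2 * pi" "\<And>j. j \<le> 2 * n \<Longrightarrow> T (z j) = 0"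
  shows "T x = 0"
proof (rule trigpoly_eq_0_if_many_zeros[OF assms(1)])
  show "z ` {..2 * n} \<subseteq> {z 0..<z 0 + 2 * pi}"
    using assms(2,3) strict_mono_leD[OF assms(2)] by (force intro: le_less_trans)
  show "2 * n < card (z ` {..2 * n})"
    using strict_mono_imp_inj_on[OF assms(2)] by (simp add: card_image)
qed (use assms(4) in auto)

lemma sign_change_zero:
  fixes f :: "real \<Rightarrow> real"
  assumes "a \<le> b" "continuous_on {a..b} f" "f a * f b < 0"
  obtains z where "a < z" "z < b" "f z = 0"
proof -
  have "\<exists>z. a \<le> z \<and> z \<le> b \<and> f z = 0"
  proof (cases "f a < 0")
    case True
    with assms show ?thesis by (intro IVT') (auto simp: mult_less_0_iff)
  next
    case False
    with assms show ?thesis by (intro IVT2') (auto simp: mult_less_0_iff)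
  qed
  then obtain z where "a \<le> z" "z \<le> b" "f z = 0" by blast
  moreover have "z \<noteq> a" "z \<noteq> b" using assms(3) \<open>f z = 0\<close> by auto
  ultimately show ?thesis by (intro that) auto
qed

lemma alternating_sign_zeros:
  fixes f :: "real \<Rightarrow> real"
  assumes cont: "continuous_on UNIV f" and t: "\<And>j. t j < t (Suc j)"
    and alt: "\<And>j. (-1) ^ j * f (t j) > 0"
  obtains z where "\<And>j. t j < z j" "\<And>j. z j < t (Suc j)" "\<And>j. f (z j) = 0"
proof -
  have "\<exists>z. t j < z \<and> z < t (Suc j) \<and> f z = 0" for j
  proof -
    have "f (t j) * f (t (Suc j)) < 0"
      using mult_pos_pos[OF alt[of j] alt[of "Suc j"]] by (simp add: mult_ac)
    with sign_change_zero[OF less_imp_le[OF t] continuous_on_subset[OF cont subset_UNIV]]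
    show ?thesis by blast
  qed
  then show ?thesis
    using that by metis
qed

lemma zero_before_increasing_zero:
  fixes f :: "real \<Rightarrow> real"
  assumes cont: "continuous_on {a..x} f" and f': "(f has_real_derivative f') (at x)" "0 < f'"
    and "a < x" "0 < f a" "f x = 0"
  obtains w where "a < w" "w < x" "f w = 0"
proof -
  obtain d where d: "d > 0" "\<And>h. 0 < h \<Longrightarrow> h < d \<Longrightarrow> f (x - h) < f x"
    using DERIV_pos_inc_left[OF f'] by blast
  define h where "h = min (d / 2) ((x - a) / 2)"
  have h: "0 < h" "h < d" "h < x - a"
    using d(1) \<open>a < x\<close> by (auto simp: h_def min_less_iff_disj)
  have "f a * f (x - h) < 0"
    using d(2)[OF h(1,2)] \<open>0 < f a\<close> \<open>f x = 0\<close> by (simp add: mult_pos_neg)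
  moreover have "continuous_on {a..x - h} f"
    by (rule continuous_on_subset[OF cont]) (use h(1) in auto)
  ultimately obtain w where "a < w" "w < x - h" "f w = 0"
    using sign_change_zero[of a "x - h" f] h(3) by auto
  with h(1) show ?thesis
    using that by simp
qed

lemma alternating_trigpoly_deriv_nonpos:
  assumes D: "D \<in> trigpoly n" and n: "1 \<le> n"
    and t: "\<And>j. t j < t (Suc j)" "t (2 * n) \<le> t 0 + 2 * pi"
    and alt: "\<And>j. (-1) ^ j * D (t j) > 0"
    and x0: "t 0 < x0" "x0 < t 1" "D x0 = 0"
  shows "deriv D x0 \<le> 0"
proof (rule ccontr)
  assume "\<not> deriv D x0 \<le> 0"
  have cont: "continuous_on S D" for S
    using D by (rule continuous_on_trigpoly)
  have "0 < deriv D x0" "0 < D (t 0)"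
    using \<open>\<not> deriv D x0 \<le> 0\<close> alt[of 0] by simp_all
  then obtain w where w: "t 0 < w" "w < x0" "D w = 0"
    using zero_before_increasing_zero[OF cont trigpoly_has_real_derivative[OF D] _ x0(1) _ x0(3)] by blast
  obtain zf where zf: "\<And>j. t j < zf j" "\<And>j. zf j < t (Suc j)" "\<And>j. D (zf j) = 0"
    using alternating_sign_zeros[OF cont t(1) alt] by blast
  define z where "z j = (if j = 0 then w else if j = 1 then x0 else zf (j - 1))" for j
  have "strict_mono z"
    unfolding strict_mono_Suc_iff
  proof
    fix j :: nat
    consider "j = 0" | "j = 1" | "2 \<le> j" by linarith
    then show "z j < z (Suc j)"
    proof cases
      case 3
      then have "zf (j - 1) < t j" using zf(2)[of "j - 1"] by simp
      with 3 show ?thesis using zf(1)[of j] by (simp add: z_def)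
    qed (use w(2) x0(2) zf(1)[of 1] in \<open>simp_all add: z_def\<close>)
  qed
  moreover have "z (2 * n) < z 0 + 2 * pi"
  proof -
    have "z (2 * n) < t (2 * n)"
      using zf(2)[of "2 * n - 1"] n by (simp add: z_def)
    then show ?thesis using t(2) w by (simp add: z_def)
  qed
  moreover have "D (z j) = 0" if "j \<le> 2 * n" for j
    using w(3) x0(3) zf(3) by (simp add: z_def)
  ultimately have "D (t 0) = 0"
    by (rule trigpoly_eq_0_if_increasing_zeros[OF D])
  then show False using alt[of 0] by simp
qed

text \<open>If \<open>U' x\<^sub>0 > n\<close>, take the cosine wave \<open>cos (n x + p)\<close> through \<open>(x\<^sub>0, U x\<^sub>0)\<close>, whose
  slope there is at most \<open>n\<close>. As \<open>\<bar>U\<bar> \<le> 1/2\<close>, the difference \<open>U - cos (n x + p)\<close> alternates in sign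
  at the extrema of the wave, and \<open>x\<^sub>0\<close> is an upward zero crossing between the first two of them.\<close>
lemma trigpoly_deriv_le_if_abs_le_half:
  assumes U: "U \<in> trigpoly n" and n: "1 \<le> n" and bd: "\<And>x. \<bar>U x\<bar> \<le> 1/2"
  shows "deriv U x0 \<le> real n"
proof (rule ccontr)
  assume "\<not> deriv U x0 \<le> real n"
  have npos: "0 < real n" using n by simp
  define A where "A = arccos (U x0)"
  have A: "0 < A" "A < pi" "cos A = U x0"
    using bd[of x0] arccos_lt_bounded[of "U x0"] unfolding A_def by (auto simp: cos_arccos_abs)
  define p where "p = - A - real n * x0"
  define D where "D x = U x - cos (real n * x + p)" for x
  define t where "t j = x0 + (A + (real j - 1) * pi) / real n" for j :: nat
  have D_tp: "D \<in> trigpoly n"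
    unfolding D_def[abs_def] by (rule trigpoly_diff[OF U trigpoly_cos_linear[OF n]])
  have "(D has_real_derivative deriv U x0 - sin A * real n) (at x0)"
    unfolding D_def[abs_def] p_def
    by (auto intro!: derivative_eq_intros trigpoly_has_real_derivative[OF U])
  then have "deriv D x0 = deriv U x0 - sin A * real n"
    by (rule DERIV_imp_deriv)
  moreover have "sin A * real n \<le> real n"
    using npos by (simp add: mult_left_le_one_le)
  moreover have "deriv D x0 \<le> 0"
  proof (rule alternating_trigpoly_deriv_nonpos[OF D_tp n])
    show "t j < t (Suc j)" for j
      using npos by (simp add: t_def divide_strict_right_mono)
    show "t (2 * n) \<le> t 0 + 2 * pi"
      using npos by (simp add: t_def field_simps)
    show "(-1) ^ j * D (t j) > 0" for j
    proof -
      have "real n * t j + p = real j * pi - pi"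
        using npos by (simp add: t_def p_def field_simps)
      then have "cos (real n * t j + p) = (-1) ^ Suc j"
        by (simp add: cos_diff)
      then have "(-1) ^ j * D (t j) = 1 + (-1) ^ j * U (t j)"
        by (simp add: D_def algebra_simps)
      moreover have "\<bar>(-1) ^ j * U (t j)\<bar> \<le> 1/2"
        using bd[of "t j"] by (simp add: abs_mult)
      ultimately show ?thesis by linarith
    qed
    show "t 0 < x0" "x0 < t 1"
      using A npos by (simp_all add: t_def divide_neg_pos)
    show "D x0 = 0"
      using A by (simp add: D_def p_def)
  qed
  ultimately show False
    using \<open>\<not> deriv U x0 \<le> real n\<close> by linarith
qed

theorem trigpoly_bernstein:
  assumes T: "T \<in> trigpoly n" and n: "1 \<le> n" and bd: "\<And>x. \<bar>T x\<bar> \<le> M"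
  shows "\<bar>deriv T x\<bar> \<le> 2 * real n * M"
proof (cases "M = 0")
  case True
  then have "T = (\<lambda>_. 0)" using bd by fastforce
  then show ?thesis using True by simp
next
  case False
  then have M: "0 < M" using bd[of x] by linarith
  have "\<sigma> * deriv T x \<le> 2 * real n * M" if "\<bar>\<sigma>\<bar> = 1" for \<sigma>
  proof -
    define U where "U y = \<sigma> / (2 * M) * T y" for y
    have "U \<in> trigpoly n"
      unfolding U_def[abs_def] using T by (rule trigpoly_cmult)
    moreover have "\<bar>U y\<bar> \<le> 1/2" for y
      using bd[of y] M that by (simp add: U_def abs_mult field_simps)
    moreover have "deriv U x = \<sigma> / (2 * M) * deriv T x"
      unfolding U_def[abs_def]
      by (intro DERIV_imp_deriv DERIV_cmult trigpoly_has_real_derivative[OF T])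
    ultimately have "\<sigma> / (2 * M) * deriv T x \<le> real n"
      using trigpoly_deriv_le_if_abs_le_half[OF _ n] by metis
    then show ?thesis using M by (simp add: field_simps)
  qed
  from this[of 1] this[of "-1"] show ?thesis by (simp add: abs_le_iff)
qed

section \<open>Cosine polynomials\<close>

definition cospoly :: "nat \<Rightarrow> (real \<Rightarrow> real) set" where
  "cospoly n = {f. \<exists>a. \<forall>x. f x = (\<Sum>k\<le>n. a k * cos (real k * x))}"

lemma cospolyI: "(\<And>x. f x = (\<Sum>k\<le>n. a k * cos (real k * x))) \<Longrightarrow> f \<in> cospoly n"
  unfolding cospoly_def by blast

lemma cospolyE:
  assumes "f \<in> cospoly n"
  obtains a where "\<And>x. f x = (\<Sum>k\<le>n. a k * cos (real k * x))"
  using assms unfolding cospoly_def by blast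

lemma cospoly_add:
  assumes "f \<in> cospoly n" "g \<in> cospoly n"
  shows "(\<lambda>x. f x + g x) \<in> cospoly n"
proof -
  obtain a where a: "\<And>x. f x = (\<Sum>k\<le>n. a k * cos (real k * x))"
    using cospolyE[OF assms(1)] by blast
  obtain c where c: "\<And>x. g x = (\<Sum>k\<le>n. c k * cos (real k * x))"
    using cospolyE[OF assms(2)] by blast
  from a c show ?thesis
    by (intro cospolyI[where a="\<lambda>k. a k + c k"]) (simp add: sum.distrib algebra_simps)
qed

lemma cospoly_cmult:
  assumes "f \<in> cospoly n"
  shows "(\<lambda>x. c * f x) \<in> cospoly n"
proof -
  obtain a where "\<And>x. f x = (\<Sum>k\<le>n. a k * cos (real k * x))"
    using cospolyE[OF assms] by blast
  then show ?thesis
    by (intro cospolyI[where a="\<lambda>k. c * a k"]) (simp add: sum_distrib_left algebra_simps)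
qed

lemma cospoly_cos:
  assumes "k \<le> n"
  shows "(\<lambda>x. cos (real k * x)) \<in> cospoly n"
proof (rule cospolyI[where a="\<lambda>j. if j = k then 1 else 0"])
  fix x
  have "(\<Sum>j\<le>n. (if j = k then 1 else 0) * cos (real j * x)) = (\<Sum>j\<le>n. if j = k then cos (real j * x) else 0)"
    by (rule sum.cong) auto
  then show "cos (real k * x) = (\<Sum>j\<le>n. (if j = k then 1 else 0) * cos (real j * x))"
    using assms by simp
qed

lemma cospoly_const: "(\<lambda>x. c) \<in> cospoly n"
  using cospoly_cmult[OF cospoly_cos[of 0 n], of c] by simp

lemma cospoly_sum:
  assumes "finite I" "\<And>i. i \<in> I \<Longrightarrow> f i \<in> cospoly n"
  shows "(\<lambda>x. \<Sum>i\<in>I. f i x) \<in> cospoly n"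
  using assms
proof (induction I rule: finite_induct)
  case empty
  then show ?case using cospoly_const[of 0] by simp
next
  case (insert i I)
  then show ?case using cospoly_add[of "f i" n "\<lambda>x. \<Sum>i\<in>I. f i x"] by simp
qed

lemma cospoly_mult_cos:
  assumes "f \<in> cospoly n"
  shows "(\<lambda>x. cos x * f x) \<in> cospoly (Suc n)"
proof -
  obtain a where a: "\<And>x. f x = (\<Sum>k\<le>n. a k * cos (real k * x))"
    using cospolyE[OF assms] by blast
  have "(\<lambda>x. a k * (cos x * cos (real k * x))) \<in> cospoly (Suc n)" if "k \<le> n" for k
  proof (cases "k = 0")
    case True
    then show ?thesis using cospoly_cmult[OF cospoly_cos[of 1 "Suc n"], of "a k"] by simp
  next
    case False
    have "cos x * cos (real k * x) = 1/2 * cos (real (Suc k) * x) + 1/2 * cos (real (k - 1) * x)" for x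
    proof -
      have "cos (real (Suc k) * x) = cos (real k * x + x)" by (simp add: algebra_simps)
      moreover have "cos (real (k - 1) * x) = cos (real k * x - x)"
        using False by (simp add: of_nat_diff algebra_simps)
      ultimately show ?thesis by (simp add: cos_add cos_diff field_simps)
    qed
    moreover have "(\<lambda>x. a k * (1/2 * cos (real (Suc k) * x) + 1/2 * cos (real (k - 1) * x))) \<in> cospoly (Suc n)"
      using that by (intro cospoly_cmult cospoly_add cospoly_cos) auto
    ultimately show ?thesis by simp
  qed
  then have "(\<lambda>x. \<Sum>k\<le>n. a k * (cos x * cos (real k * x))) \<in> cospoly (Suc n)"
    by (intro cospoly_sum) auto
  then show ?thesis by (simp add: a sum_distrib_left algebra_simps)
qed

lemma cospoly_poly_cos:
  assumes "degree p \<le> n"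
  shows "(\<lambda>x. poly p (cos x)) \<in> cospoly n"
  using assms
proof (induction n arbitrary: p)
  case 0
  then have "p = [:coeff p 0:]"
    by (simp add: degree_0_id)
  then have "(\<lambda>x. poly p (cos x)) = (\<lambda>x. coeff p 0)"
    by (metis poly_pCons poly_0 mult_zero_right add_0_right)
  then show ?case using cospoly_const by simp
next
  case (Suc n)
  obtain c q where p: "p = pCons c q" by (cases p) auto
  have "degree q \<le> n" using Suc.prems p by (cases "q = 0") auto
  then have "(\<lambda>x. cos x * poly q (cos x)) \<in> cospoly (Suc n)"
    using Suc.IH cospoly_mult_cos by blast
  then have "(\<lambda>x. c + cos x * poly q (cos x)) \<in> cospoly (Suc n)"
    using cospoly_add[OF cospoly_const] by blast
  then show ?case using p by simp
qed

lemma cospoly_subset_trigpoly: "cospoly n \<subseteq> trigpoly n"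
proof
  fix f assume "f \<in> cospoly n"
  then obtain a where a: "\<And>x. f x = (\<Sum>k\<le>n. a k * cos (real k * x))"
    using cospolyE by blast
  have "{..n} = insert 0 {1..n}" by auto
  then have "f x = a 0 + (\<Sum>k=1..n. a k * cos (real k * x) + 0 * sin (real k * x))" for x
    by (simp add: a)
  then show "f \<in> trigpoly n" by (rule trigpolyI)
qed

lemma trigpoly_poly_affine_cos:
  assumes "degree p \<le> n"
  shows "(\<lambda>t. poly p (\<alpha> + \<beta> * cos t)) \<in> trigpoly n"
proof -
  have "degree (pcompose p [:\<alpha>, \<beta>:]) \<le> degree p * degree [:\<alpha>, \<beta>:]"
    by (rule degree_pcompose_le)
  also have "\<dots> \<le> n * 1"
    using assms by (intro mult_le_mono) (auto simp: degree_pCons_eq_if)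
  finally have "(\<lambda>t. poly (pcompose p [:\<alpha>, \<beta>:]) (cos t)) \<in> cospoly n"
    by (intro cospoly_poly_cos) simp
  then have "(\<lambda>t. poly (pcompose p [:\<alpha>, \<beta>:]) (cos t)) \<in> trigpoly n"
    using cospoly_subset_trigpoly by blast
  then show ?thesis by (simp add: poly_pcompose algebra_simps)
qed

fun chebyshev_poly :: "nat \<Rightarrow> real poly" where
  "chebyshev_poly 0 = 1"
| "chebyshev_poly (Suc 0) = [:0, 1:]"
| "chebyshev_poly (Suc (Suc k)) = [:0, 2:] * chebyshev_poly (Suc k) - chebyshev_poly k"

lemma degree_chebyshev_poly: "degree (chebyshev_poly k) \<le> k"
proof (induction k rule: chebyshev_poly.induct)
  case (3 k)
  have "degree ([:0, 2:] * chebyshev_poly (Suc k)) \<le> Suc (Suc k)"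
    using degree_mult_le[of "[:0, 2:]" "chebyshev_poly (Suc k)"] 3 by simp
  moreover have "degree (chebyshev_poly k) \<le> Suc (Suc k)"
    using 3 by simp
  ultimately show ?case by (simp add: degree_diff_le)
qed simp_all

lemma poly_chebyshev_poly_cos: "poly (chebyshev_poly k) (cos x) = cos (real k * x)"
proof (induction k rule: chebyshev_poly.induct)
  case (3 k)
  have "cos (real (Suc (Suc k)) * x) = cos (real (Suc k) * x + x)"
    by (simp add: algebra_simps)
  moreover have "cos (real k * x) = cos (real (Suc k) * x - x)"
    by (simp add: algebra_simps)
  ultimately have "cos (real (Suc (Suc k)) * x) = 2 * cos x * cos (real (Suc k) * x) - cos (real k * x)"
    by (simp add: cos_add cos_diff)
  with 3 show ?case by simp
qed simp_all

lemma trigpoly_even_part_eq_poly_cos: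
  assumes "T \<in> trigpoly n"
  obtains p where "degree p \<le> n" "\<And>x. (T x + T (- x)) / 2 = poly p (cos x)"
proof -
  obtain a b where T: "\<And>x. T x = a 0 + (\<Sum>k=1..n. a k * cos (real k * x) + b k * sin (real k * x))"
    using trigpolyE[OF assms] by blast
  define p where "p = [:a 0:] + (\<Sum>k=1..n. smult (a k) (chebyshev_poly k))"
  have "degree p \<le> n"
    unfolding p_def using degree_chebyshev_poly
    by (intro degree_add_le degree_sum_le) (auto intro: order.trans[OF degree_smult_le] order.trans[OF degree_chebyshev_poly])
  moreover have "(T x + T (- x)) / 2 = poly p (cos x)" for x
  proof -
    have "T x + T (- x) = 2 * a 0 + (\<Sum>k=1..n. 2 * (a k * cos (real k * x)))"
      unfolding T by (simp add: sum.distrib[symmetric] algebra_simps)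
    then have "(T x + T (- x)) / 2 = a 0 + (\<Sum>k=1..n. a k * cos (real k * x))"
      by (simp add: sum_distrib_left[symmetric])
    also have "\<dots> = poly p (cos x)"
      by (simp add: p_def poly_sum poly_chebyshev_poly_cos)
    finally show ?thesis .
  qed
  ultimately show ?thesis by (rule that)
qed

lemma even_cos_poly_approximant:
  assumes T: "T \<in> trigpoly n" and even: "\<And>x. f (- x) = f x"
    and approx: "\<And>x. x \<in> {-b..b} \<Longrightarrow> \<bar>f x - T x\<bar> \<le> E"
  obtains p where "degree p \<le> n" "\<And>x. x \<in> {-b..b} \<Longrightarrow> \<bar>poly p (cos x) - f x\<bar> \<le> E"
proof -
  obtain p where p: "degree p \<le> n" "\<And>x. (T x + T (- x)) / 2 = poly p (cos x)"
    using trigpoly_even_part_eq_poly_cos[OF T] by blast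
  have "\<bar>poly p (cos x) - f x\<bar> \<le> E" if "x \<in> {-b..b}" for x
  proof -
    have "\<bar>f x - T x\<bar> \<le> E" "\<bar>f x - T (- x)\<bar> \<le> E"
      using approx[of x] approx[of "- x"] even[of x] that by auto
    then show ?thesis
      unfolding p(2)[symmetric] by (simp add: abs_le_iff field_simps)
  qed
  with p(1) show ?thesis by (rule that)
qed

lemma abs_le_supnorm_on:
  assumes "continuous_on {a..b} g" "x \<in> {a..b}"
  shows "\<bar>g x\<bar> \<le> supnorm_on a b g"
proof -
  have "compact ((\<lambda>x. \<bar>g x\<bar>) ` {a..b})"
    by (intro compact_continuous_image continuous_on_rabs assms(1)) simp
  then have "bdd_above ((\<lambda>x. \<bar>g x\<bar>) ` {a..b})"
    by (intro bounded_imp_bdd_above compact_imp_bounded)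
  then show ?thesis
    unfolding supnorm_on_def by (rule cSUP_upper[OF assms(2)])
qed

lemma supnorm_on_le:
  assumes "a \<le> b" "\<And>x. x \<in> {a..b} \<Longrightarrow> \<bar>g x\<bar> \<le> K"
  shows "supnorm_on a b g \<le> K"
  unfolding supnorm_on_def using assms by (intro cSUP_least) auto

text \<open>Mean value theorem for the central difference \<open>P (x + h) - P (x - h)\<close> on \<open>[-h, h]\<close>.\<close>
lemma second_difference_le:
  fixes P f :: "real \<Rightarrow> real"
  assumes P': "\<And>x. (P has_real_derivative P' x) (at x)" and h: "0 < h"
    and approx: "\<And>x. \<bar>x\<bar> \<le> 2 * h \<Longrightarrow> \<bar>P x - f x\<bar> \<le> E"
    and K: "\<And>z. \<bar>z\<bar> < h \<Longrightarrow> \<bar>P' (z + h) - P' (z - h)\<bar> \<le> K"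
  shows "f (2 * h) - 2 * f 0 + f (- 2 * h) \<le> 2 * h * K + 4 * E"
proof -
  have "((\<lambda>x. P (x + h) - P (x - h)) has_real_derivative P' (x + h) - P' (x - h)) (at x)" for x
    by (auto intro!: derivative_eq_intros DERIV_chain2[OF P'])
  then obtain z where z: "- h < z" "z < h"
    and mvt: "P (2 * h) + P (- (2 * h)) - 2 * P 0 = 2 * h * (P' (z + h) - P' (z - h))"
    using MVT2[of "- h" h "\<lambda>x. P (x + h) - P (x - h)" "\<lambda>x. P' (x + h) - P' (x - h)"] h by auto
  have "2 * h * (P' (z + h) - P' (z - h)) \<le> 2 * h * K"
    using K[of z] z h by (intro mult_left_mono) (auto simp: abs_less_iff abs_le_iff)
  moreover have "\<bar>P (2 * h) - f (2 * h)\<bar> \<le> E" "\<bar>P 0 - f 0\<bar> \<le> E" "\<bar>P (- (2 * h)) - f (- (2 * h))\<bar> \<le> E"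
    using approx h by simp_all
  moreover have "f (- 2 * h) = f (- (2 * h))" by simp
  ultimately show ?thesis
    using mvt unfolding abs_le_iff by linarith
qed

lemma trigpoly_second_difference_le:
  assumes P: "P \<in> trigpoly n" and n: "1 \<le> n" and h: "0 < h"
    and approx: "\<And>x. \<bar>P x - f x\<bar> \<le> E" and diff: "\<And>x. \<bar>f (x + h) - f (x - h)\<bar> \<le> L"
  shows "f (2 * h) - 2 * f 0 + f (- 2 * h) \<le> 4 * real n * h * (L + 2 * E) + 4 * E"
proof -
  have "\<bar>P (x + h) - P (x - h)\<bar> \<le> L + 2 * E" for x
    using approx[of "x + h"] approx[of "x - h"] diff[of x] by (auto simp: abs_le_iff)
  then have K: "\<bar>deriv P (z + h) - deriv P (z - h)\<bar> \<le> 2 * real n * (L + 2 * E)" for z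
    using trigpoly_bernstein[OF trigpoly_central_difference(1)[OF P] n]
    by (simp add: trigpoly_central_difference(2)[OF P])
  have "f (2 * h) - 2 * f 0 + f (- 2 * h) \<le> 2 * h * (2 * real n * (L + 2 * E)) + 4 * E"
    by (rule second_difference_le[OF trigpoly_has_real_derivative[OF P] h _ K]) (rule approx)
  then show ?thesis
    by (simp add: algebra_simps)
qed

section \<open>The arc contraction\<close>

lemma abs_sin_diff_le: "\<bar>sin u - sin v\<bar> \<le> \<bar>u - v :: real\<bar>"
proof -
  have "\<bar>sin u - sin v\<bar> = 2 * \<bar>sin ((u - v) / 2)\<bar> * \<bar>cos ((u + v) / 2)\<bar>"
    by (simp add: sin_diff_sin abs_mult)
  also have "\<dots> \<le> 2 * \<bar>(u - v) / 2\<bar> * 1"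
    by (intro mult_mono abs_sin_x_le_abs_x) auto
  finally show ?thesis by simp
qed

lemma sin_diff_ge_half:
  assumes "0 \<le> q" "q \<le> p" "p \<le> pi / 3"
  shows "(p - q) / 2 \<le> sin p - sin q"
proof (cases "q = p")
  case False
  then have "q < p" using assms by simp
  then obtain z where z: "q < z" "z < p" "sin p - sin q = (p - q) * cos z"
    using MVT2[of q p sin cos] by (auto intro: DERIV_sin)
  have "1 / 2 \<le> cos z"
    using cos_monotone_0_pi_le[of z "pi / 3"] z assms by (simp add: cos_60)
  then show ?thesis
    using z(3) \<open>q < p\<close> mult_left_mono[of "1 / 2" "cos z" "p - q"] by simp
qed simp

lemma arcsin_ge_self:
  assumes "0 \<le> w" "w \<le> 1"
  shows "w \<le> arcsin w"
  using sin_x_le_x[of "arcsin w"] arcsin_nonneg[of w] assms by simp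

text \<open>For \<open>s = sin (b / 2)\<close> it maps the real line
  onto \<open>[0, b]\<close>, and since \<open>cos x = 1 - s\<^sup>2 + s\<^sup>2 cos t\<close> it turns even trigonometric polynomials
  of degree \<open>n\<close> in \<open>x\<close> into trigonometric polynomials of degree \<open>n\<close> in \<open>t\<close>, while the corner
  of \<open>\<bar>x\<bar>\<close> at \<open>0\<close> becomes a corner of slope about \<open>s\<close>.\<close>
definition arc_contraction :: "real \<Rightarrow> real \<Rightarrow> real" where
  "arc_contraction s t = 2 * arcsin (s * \<bar>sin (t / 2)\<bar>)"

lemma arc_contraction_bounds:
  assumes "0 \<le> s" "s \<le> 1"
  shows "0 \<le> arc_contraction s t" "arc_contraction s t \<le> 2 * arcsin s"
proof -
  define y where "y = s * \<bar>sin (t / 2)\<bar>"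
  have y: "0 \<le> y" "y \<le> s"
    using assms(1) by (auto simp: y_def intro: mult_left_le)
  have "arcsin y \<le> arcsin s"
    by (rule arcsin_le_arcsin) (use y assms in linarith)+
  moreover have "0 \<le> arcsin y"
    using y assms by (intro arcsin_nonneg) simp
  ultimately show "0 \<le> arc_contraction s t" "arc_contraction s t \<le> 2 * arcsin s"
    by (simp_all add: arc_contraction_def y_def)
qed

lemma cos_arc_contraction:
  assumes "0 \<le> s" "s \<le> 1"
  shows "cos (arc_contraction s t) = 1 - s\<^sup>2 + s\<^sup>2 * cos t"
proof -
  have "0 \<le> s * \<bar>sin (t / 2)\<bar>" "s * \<bar>sin (t / 2)\<bar> \<le> 1"
    using assms by (auto intro: mult_le_one)
  then have "cos (arc_contraction s t) = 1 - 2 * (s * \<bar>sin (t / 2)\<bar>)\<^sup>2"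
    unfolding arc_contraction_def cos_double_sin by simp
  also have "\<dots> = 1 - s\<^sup>2 + s\<^sup>2 * (1 - 2 * (sin (t / 2))\<^sup>2)"
    by (simp add: power_mult_distrib algebra_simps)
  also have "1 - 2 * (sin (t / 2))\<^sup>2 = cos t"
    using cos_double_sin[of "t / 2"] by simp
  finally show ?thesis .
qed

lemma arc_contraction_lipschitz:
  assumes "0 \<le> s" "s \<le> 1 / 2"
  shows "\<bar>arc_contraction s u - arc_contraction s v\<bar> \<le> 2 * s * \<bar>u - v\<bar>"
proof -
  define g where "g t = arcsin (s * \<bar>sin (t / 2)\<bar>)" for t
  have "arcsin s \<le> arcsin (sin (pi / 6))"
    using assms by (intro arcsin_le_arcsin) (auto simp: sin_30)
  then have "arcsin s \<le> pi / 6"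
    by (simp add: arcsin_sin)
  then have g: "0 \<le> g t" "g t \<le> pi / 3" for t
    using arc_contraction_bounds[of s t] assms by (auto simp: arc_contraction_def g_def)
  have sin_g: "sin (g t) = s * \<bar>sin (t / 2)\<bar>" for t
  proof -
    have "0 \<le> s * \<bar>sin (t / 2)\<bar>" "s * \<bar>sin (t / 2)\<bar> \<le> 1"
      using assms by (auto intro: mult_le_one)
    then show ?thesis by (simp add: g_def)
  qed
  have "\<bar>g u - g v\<bar> \<le> 2 * \<bar>sin (g u) - sin (g v)\<bar>"
    using sin_diff_ge_half[of "g u" "g v"] sin_diff_ge_half[of "g v" "g u"] g[of u] g[of v]
    by (cases "g u \<le> g v") auto
  also have "\<dots> = 2 * s * \<bar>\<bar>sin (u / 2)\<bar> - \<bar>sin (v / 2)\<bar>\<bar>"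
    using assms by (simp add: sin_g right_diff_distrib[symmetric] abs_mult)
  also have "\<dots> \<le> 2 * s * \<bar>u / 2 - v / 2\<bar>"
    using assms abs_sin_diff_le[of "u / 2" "v / 2"]
    by (intro mult_left_mono order.trans[OF abs_triangle_ineq3]) auto
  also have "\<dots> = s * \<bar>u - v\<bar>"
    by (simp add: diff_divide_distrib[symmetric])
  finally show ?thesis
    unfolding arc_contraction_def g_def[symmetric] abs_le_iff by linarith
qed

lemma arc_contraction_ge:
  assumes "0 \<le> s" "s \<le> 1" "0 \<le> t" "t \<le> 2 * pi / 3"
  shows "s * t / 2 \<le> arc_contraction s t"
proof -
  have "t / 4 \<le> sin (t / 2)"
    using sin_diff_ge_half[of 0 "t / 2"] assms by simp
  then have "s * (t / 4) \<le> s * \<bar>sin (t / 2)\<bar>"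
    using assms(1) by (intro mult_left_mono) auto
  also have "\<dots> \<le> arcsin (s * \<bar>sin (t / 2)\<bar>)"
    using assms by (intro arcsin_ge_self) (auto intro: mult_le_one)
  finally show ?thesis
    by (simp add: arc_contraction_def)
qed

lemma sin_half_bounds:
  assumes "0 < b" "b \<le> pi / 3"
  shows "0 < sin (b / 2)" "sin (b / 2) \<le> 1 / 2" "b / 4 \<le> sin (b / 2)"
proof -
  show "0 < sin (b / 2)"
    using assms by (simp add: sin_gt_zero)
  have "sin (b / 2) \<le> sin (pi / 6)"
    using assms by (simp add: sin_mono_le_eq)
  then show "sin (b / 2) \<le> 1 / 2"
    by (simp add: sin_30)
  show "b / 4 \<le> sin (b / 2)"
    using sin_diff_ge_half[of 0 "b / 2"] assms by simp
qed

lemma arc_contraction_approximant: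
  assumes b: "0 < b" "b \<le> pi" and approx: "\<And>x. x \<in> {-b..b} \<Longrightarrow> \<bar>poly p (cos x) - \<bar>x\<bar>\<bar> \<le> E"
  shows "\<bar>poly p (1 - (sin (b / 2))\<^sup>2 + (sin (b / 2))\<^sup>2 * cos t) - arc_contraction (sin (b / 2)) t\<bar> \<le> E"
proof -
  define s where "s = sin (b / 2)"
  have s: "0 \<le> s" "s \<le> 1" "2 * arcsin s = b"
    using b by (simp_all add: s_def sin_ge_zero arcsin_sin)
  then have "0 \<le> arc_contraction s t" "arc_contraction s t \<le> b"
    using arc_contraction_bounds[of s t] by simp_all
  then show ?thesis
    using approx[of "arc_contraction s t"] s by (simp add: s_def[symmetric] cos_arc_contraction)
qed

section \<open>Approximation of the absolute value\<close>

lemma abs_approx_error_ge_small_interval: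
  assumes b: "0 < b" "b \<le> pi / 3" and n: "1 \<le> n" and T: "T \<in> trigpoly n"
    and approx: "\<And>x. x \<in> {-b..b} \<Longrightarrow> \<bar>\<bar>x\<bar> - T x\<bar> \<le> E"
  shows "b / (288 * real n) \<le> E"
proof -
  obtain p where p: "degree p \<le> n" "\<And>x. x \<in> {-b..b} \<Longrightarrow> \<bar>poly p (cos x) - \<bar>x\<bar>\<bar> \<le> E"
    using even_cos_poly_approximant[OF T _ approx] by auto
  define s where "s = sin (b / 2)"
  note s = sin_half_bounds[OF b, folded s_def]
  define \<eta> where "\<eta> = 1 / (16 * real n)"
  have \<eta>: "0 < \<eta>" "\<eta> \<le> 1 / 16" "4 * real n * \<eta> = 1 / 4"
    using n by (auto simp: \<eta>_def field_simps)
  have "arc_contraction s (2 * \<eta>) - 2 * arc_contraction s 0 + arc_contraction s (- 2 * \<eta>)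
      \<le> 4 * real n * \<eta> * (4 * s * \<eta> + 2 * E) + 4 * E"
  proof (rule trigpoly_second_difference_le[OF _ n \<eta>(1)])
    show "(\<lambda>t. poly p (1 - s\<^sup>2 + s\<^sup>2 * cos t)) \<in> trigpoly n"
      using p(1) by (rule trigpoly_poly_affine_cos)
    show "\<bar>poly p (1 - s\<^sup>2 + s\<^sup>2 * cos t) - arc_contraction s t\<bar> \<le> E" for t
      unfolding s_def using arc_contraction_approximant[OF _ _ p(2)] b by simp
    show "\<bar>arc_contraction s (t + \<eta>) - arc_contraction s (t - \<eta>)\<bar> \<le> 4 * s * \<eta>" for t
      using arc_contraction_lipschitz[of s "t + \<eta>" "t - \<eta>"] s \<eta> by simp
  qed
  also have "\<dots> = s * \<eta> + 9 / 2 * E"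
    unfolding \<eta>(3) by (simp add: algebra_simps)
  finally have "2 * arc_contraction s (2 * \<eta>) \<le> s * \<eta> + 9 / 2 * E"
    by (simp add: arc_contraction_def)
  moreover have "s * \<eta> \<le> arc_contraction s (2 * \<eta>)"
    using arc_contraction_ge[of s "2 * \<eta>"] s \<eta> pi_gt3 by simp
  moreover have "b / 4 * \<eta> \<le> s * \<eta>"
    by (intro mult_right_mono) (use s(3) \<eta>(1) in auto)
  ultimately have "b / 4 * \<eta> \<le> 9 / 2 * E"
    by linarith
  then show ?thesis
    using n by (simp add: \<eta>_def field_simps)
qed

lemma abs_approx_error_ge:
  assumes b: "0 < b" "b \<le> pi" and n: "1 \<le> n" and T: "T \<in> trigpoly n"
    and approx: "\<And>x. x \<in> {-b..b} \<Longrightarrow> \<bar>\<bar>x\<bar> - T x\<bar> \<le> E"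
  shows "b / (864 * real n) \<le> E"
proof -
  define b' where "b' = min b (pi / 3)"
  have "b' / (288 * real n) \<le> E"
  proof (rule abs_approx_error_ge_small_interval[OF _ _ n T])
    show "0 < b'" "b' \<le> pi / 3" using b by (simp_all add: b'_def)
    have "b' \<le> b" by (simp add: b'_def)
    then show "\<bar>\<bar>x\<bar> - T x\<bar> \<le> E" if "x \<in> {-b'..b'}" for x
      using approx that by simp
  qed
  moreover have "b / (864 * real n) \<le> b' / (288 * real n)"
    using b n by (simp add: b'_def field_simps)
  ultimately show ?thesis by linarith
qed

lemma bernstein_const_ge:
  assumes "bernstein_const c0"
  shows "pi / 2 \<le> c0"
proof -
  define S where "S = supnorm_on (- (pi / 2)) (pi / 2) sin"
  have sin: "sin \<in> trigpoly 1"
    by (rule trigpolyI[where a="\<lambda>k. 0" and b="\<lambda>k. 1"]) simp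
  have "deriv sin (0 :: real) = 1"
    using DERIV_imp_deriv[OF DERIV_sin[of 0]] by simp
  then have "1 \<le> supnorm_on (- (pi / 2) / 2) ((pi / 2) / 2) (deriv sin)"
    using abs_le_supnorm_on[of "- (pi / 2) / 2" "(pi / 2) / 2" "deriv sin" 0]
      continuous_on_trigpoly[OF trigpoly_deriv[OF sin]] by simp
  also have "\<dots> \<le> c0 / (pi / 2) * real 1 * S"
    using assms[unfolded bernstein_const_def, rule_format, of "pi / 2" 1 sin] sin by (simp add: S_def)
  finally have key: "1 \<le> c0 / (pi / 2) * S"
    by simp
  have S: "0 \<le> S" "S \<le> 1"
    using abs_le_supnorm_on[of "- (pi / 2)" "pi / 2" sin 0] supnorm_on_le[of "- (pi / 2)" "pi / 2" sin 1]
    by (simp_all add: S_def continuous_on_sin)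
  have "0 < c0 / (pi / 2) * S"
    using key by linarith
  then have "0 < c0 / (pi / 2)"
    using S(1) by (auto simp only: zero_less_mult_iff)
  then have "c0 / (pi / 2) * S \<le> c0 / (pi / 2)"
    using S by (intro mult_right_le_one_le) auto
  with key show ?thesis
    by (simp add: field_simps)
qed

lemma bernstein_const_second_difference_le:
  assumes c0: "bernstein_const c0" and P: "P \<in> trigpoly n" and n: "1 \<le> n"
    and even: "\<And>x. P (- x) = P x" and h: "0 < h" and b': "0 < b'" "b' < pi" "2 * h \<le> b'"
    and approx: "\<And>x. \<bar>x\<bar> \<le> b' + h \<Longrightarrow> \<bar>P x - f x\<bar> \<le> E"
    and diff: "\<And>x. x \<in> {-b'..b'} \<Longrightarrow> \<bar>f (x + h) - f (x - h)\<bar> \<le> L"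
  shows "f (2 * h) - 2 * f 0 + f (- 2 * h) \<le> 2 * c0 * real n * h * (L + 2 * E) / b' + 4 * E"
proof -
  define S where "S x = P (x + h) - P (x - h)" for x
  have S: "S \<in> trigpoly n"
    using trigpoly_central_difference(1)[OF P] by (simp add: S_def[abs_def])
  have odd: "\<forall>x. S (- x) = - S x"
    using even[of "_ - h"] even[of "_ + h"] by (simp add: S_def)
  have "supnorm_on (- b') b' S \<le> L + 2 * E"
  proof (rule supnorm_on_le)
    show "\<bar>S x\<bar> \<le> L + 2 * E" if "x \<in> {- b'..b'}" for x
      using diff[OF that] approx[of "x + h"] approx[of "x - h"] that h by (auto simp: S_def abs_le_iff)
  qed (use b' in simp)
  moreover have "supnorm_on (- b' / 2) (b' / 2) (deriv S) \<le> c0 / b' * real n * supnorm_on (- b') b' S"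
    using c0 S odd b' n unfolding bernstein_const_def by blast
  moreover have "0 \<le> c0 / b' * real n"
    using bernstein_const_ge[OF c0] b' by simp
  ultimately have sup_dS: "supnorm_on (- b' / 2) (b' / 2) (deriv S) \<le> c0 / b' * real n * (L + 2 * E)"
    by (meson mult_left_mono order_trans)
  have K: "\<bar>deriv P (z + h) - deriv P (z - h)\<bar> \<le> c0 / b' * real n * (L + 2 * E)" if "\<bar>z\<bar> < h" for z
  proof -
    have "z \<in> {- b' / 2..b' / 2}"
      using that b'(3) by (auto simp: abs_less_iff)
    then have "\<bar>deriv S z\<bar> \<le> supnorm_on (- b' / 2) (b' / 2) (deriv S)"
      by (intro abs_le_supnorm_on continuous_on_trigpoly[OF trigpoly_deriv[OF S]])
    then show ?thesis
      using sup_dS trigpoly_central_difference(2)[OF P, of h z] by (simp add: S_def[abs_def])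
  qed
  have "f (2 * h) - 2 * f 0 + f (- 2 * h) \<le> 2 * h * (c0 / b' * real n * (L + 2 * E)) + 4 * E"
    by (rule second_difference_le[OF trigpoly_has_real_derivative[OF P] h _ K])
       (use approx h b'(3) in auto)
  then show ?thesis
    by (simp add: algebra_simps add_divide_distrib)
qed

lemma abs_approx_error_ge_bernstein_const:
  assumes c0: "bernstein_const c0" and b: "0 < b" "b \<le> pi" and n: "1 \<le> n" and T: "T \<in> trigpoly n"
    and approx: "\<And>x. x \<in> {-b..b} \<Longrightarrow> \<bar>\<bar>x\<bar> - T x\<bar> \<le> E"
  shows "2 * b / (25 * c0 * real n) \<le> E"
proof -
  have "1 \<le> c0 * real n"
    using bernstein_const_ge[OF c0] pi_gt3 n mult_mono[of 1 c0 1 "real n"] by simp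
  obtain p where p: "degree p \<le> n" "\<And>x. x \<in> {-b..b} \<Longrightarrow> \<bar>poly p (cos x) - \<bar>x\<bar>\<bar> \<le> E"
    using even_cos_poly_approximant[OF T _ approx] by auto
  define h where "h = b / (10 * c0 * real n)"
  have h: "0 < h" "h \<le> b / 10" "c0 * real n * h = b / 10"
    using b n \<open>1 \<le> c0 * real n\<close> by (auto simp: h_def field_simps)
  define b' where "b' = b - h"
  have b': "0 < b'" "b' < pi" "2 * h \<le> b'" "9 * b / 10 \<le> b'"
    using b h by (auto simp: b'_def)
  define X where "X = 2 * c0 * real n * h * (2 * h + 2 * E) / b'"
  have "\<bar>2 * h\<bar> - 2 * \<bar>0\<bar> + \<bar>- 2 * h\<bar> \<le> X + 4 * E"
    unfolding X_def
  proof (rule bernstein_const_second_difference_le[where f = "\<lambda>x. \<bar>x\<bar>", OF c0 _ n _ h(1) b'(1-3)])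
    show "(\<lambda>x. poly p (cos x)) \<in> trigpoly n"
      using trigpoly_poly_affine_cos[OF p(1), of 0 1] by simp
    show "\<bar>poly p (cos x) - \<bar>x\<bar>\<bar> \<le> E" if "\<bar>x\<bar> \<le> b' + h" for x
      using p(2) that by (simp add: b'_def abs_le_iff)
    show "\<bar>\<bar>x + h\<bar> - \<bar>x - h\<bar>\<bar> \<le> 2 * h" for x
      using abs_triangle_ineq3[of "x + h" "x - h"] h(1) by simp
  qed simp
  then have "4 * h \<le> X + 4 * E"
    using h(1) by simp
  moreover have "9 * X \<le> 4 * h + 4 * E"
  proof -
    have "X = 4 * (h + E) * (c0 * real n * h / b')"
      by (simp add: X_def field_simps)
    moreover have "9 * (c0 * real n * h / b') \<le> 1"
      using h(3) b b' by (simp add: field_simps)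
    moreover have "0 \<le> h + E"
      using p(2)[of 0] b h by simp
    ultimately have "9 * X \<le> 4 * (h + E)"
      using mult_left_mono[of "9 * (c0 * real n * h / b')" 1 "4 * (h + E)"] by (simp add: ac_simps)
    then show ?thesis
      by (simp add: distrib_left)
  qed
  ultimately have "4 * h \<le> 5 * E"
    by linarith
  moreover have "2 * b / (25 * c0 * real n) = 4 * h / 5"
    using \<open>1 \<le> c0 * real n\<close> by (simp add: h_def field_simps)
  ultimately show ?thesis
    by linarith
qed

theorem lemma3p3:
  shows "(\<exists>c1>0. \<forall>b n T. 0 < b \<and> b \<le> pi \<and> n \<ge> 1 \<and> T \<in> trigpoly n \<longrightarrow>
            supnorm_on (-b) b (\<lambda>x. \<bar>x\<bar> - T x) \<ge> c1 * b / real n)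
       \<and> (\<forall>c0>0. bernstein_const c0 \<longrightarrow>
            (\<forall>b n T. 0 < b \<and> b \<le> pi \<and> n \<ge> 1 \<and> T \<in> trigpoly n \<longrightarrow>
              supnorm_on (-b) b (\<lambda>x. \<bar>x\<bar> - T x) \<ge> (1 / (80 * c0)) * b / real n))"
proof -
  have approx: "\<bar>\<bar>x\<bar> - T x\<bar> \<le> supnorm_on (-b) b (\<lambda>x. \<bar>x\<bar> - T x)"
    if "T \<in> trigpoly n" "x \<in> {-b..b}" for T n b x
  proof (rule abs_le_supnorm_on[OF _ that(2)])
    show "continuous_on {-b..b} (\<lambda>x. \<bar>x\<bar> - T x)"
      using continuous_on_trigpoly[OF that(1)] by (intro continuous_intros)
  qed
  have "1 / 864 * b / real n \<le> supnorm_on (-b) b (\<lambda>x. \<bar>x\<bar> - T x)"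
    if "0 < b" "b \<le> pi" "1 \<le> n" "T \<in> trigpoly n" for b n T
    using abs_approx_error_ge[OF that approx[OF that(4)]] by simp
  moreover have "1 / (80 * c0) * b / real n \<le> supnorm_on (-b) b (\<lambda>x. \<bar>x\<bar> - T x)"
    if "0 < c0" "bernstein_const c0" "0 < b" "b \<le> pi" "1 \<le> n" "T \<in> trigpoly n" for c0 b n T
  proof -
    have "1 / (80 * c0) * b / real n \<le> 2 * b / (25 * c0 * real n)"
      using that by (simp add: field_simps)
    also have "\<dots> \<le> supnorm_on (-b) b (\<lambda>x. \<bar>x\<bar> - T x)"
      using abs_approx_error_ge_bernstein_const[OF that(2-6) approx[OF that(6)]] .
    finally show ?thesis .
  qed
  ultimately show ?thesis
    by (intro conjI exI[of _ "1 / 864"]) auto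
qed

end
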